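(* On the interval $[0,1]$: (i) the function $\dfrac{\cos(\frac12\pi x)}{1-x^2}$ attains its global maximum at $x=0$; (ii) the function $\dfrac{(x^2+1)\cos^2(\frac12\pi x)}{(1-x^2)^2}$ attains its global minimum at $x=0$.
   Context: At $x=1$ both functions have removable singularities and are understood as their continuous extensions. *)

theory Defs
  imports "HOL-Analysis.Analysis"
begin

text \<open>The two functions of Lemma 6, with the removable singularity at x = 1
  filled in by its limit value (continuous extension).\<close>

definition f1 :: "real \<Rightarrow> real" where
  "f1 x = (if x = 1 then pi / 4 else cos (pi * x / 2) / (1 - x\<^sup>2))"

definition f2 :: "real \<Rightarrow> real" where
  "f2 x = (if x = 1 then pi\<^sup>2 / 8
           else (x\<^sup>2 + 1) * (cos (pi * x / 2))\<^sup>2 / (1 - x\<^sup>2)\<^sup>2)"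

end

theory Submission
  imports Defs
begin

text \<open>After clearing the positive denominators, the two claims become
  \<open>cos (\<pi>x/2) \<le> 1 - x\<^sup>2\<close> and \<open>(1 - x\<^sup>2)\<^sup>2 \<le> (1 + x\<^sup>2) cos\<^sup>2 (\<pi>x/2)\<close>, both with equality at
  \<open>x = 0\<close> and \<open>x = 1\<close>. For \<open>|x| \<le> 3/5\<close> they follow from the Taylor bounds of \<open>cos\<close>
  at \<open>0\<close>; for \<open>3/5 \<le> x \<le> 1\<close> one writes \<open>cos (\<pi>x/2) = sin (\<pi>(1 - x)/2)\<close> and uses
  the Taylor bounds of \<open>sin\<close> at \<open>0\<close>. In each regime what is left is a polynomial
  inequality, for which \<open>9.8 \<le> \<pi>\<^sup>2 \<le> 10\<close> is precise enough.\<close>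

lemma cos_ge_taylor2: "1 - x\<^sup>2 / 2 \<le> cos (x::real)"
proof -
  obtain t where "cos x = (\<Sum>m<2. cos_coeff m * x ^ m) + cos (t + 1/2 * real 2 * pi) / fact 2 * x ^ 2"
    using Maclaurin_cos_expansion by blast
  moreover have "cos (t + 1/2 * real 2 * pi) * x\<^sup>2 \<ge> - 1 * x\<^sup>2"
    by (intro mult_right_mono) auto
  ultimately show ?thesis
    by (simp add: cos_coeff_def lessThan_nat_numeral fact_numeral)
qed

lemma cos_le_taylor4: "cos (x::real) \<le> 1 - x\<^sup>2 / 2 + x ^ 4 / 24"
proof -
  obtain t where "cos x = (\<Sum>m<4. cos_coeff m * x ^ m) + cos (t + 1/2 * real 4 * pi) / fact 4 * x ^ 4"
    using Maclaurin_cos_expansion by blast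
  moreover have "cos (t + 1/2 * real 4 * pi) * x ^ 4 \<le> 1 * x ^ 4"
    by (intro mult_right_mono) auto
  ultimately show ?thesis
    by (simp add: cos_coeff_def lessThan_nat_numeral fact_numeral)
qed

lemma sin_ge_taylor3:
  fixes x :: real
  assumes "0 \<le> x"
  shows "x - x ^ 3 / 6 \<le> sin x"
proof -
  obtain t where "sin x = (\<Sum>m<3. sin_coeff m * x ^ m) + sin (t + 1/2 * real 3 * pi) / fact 3 * x ^ 3"
    using Maclaurin_sin_expansion by blast
  moreover have "sin (t + 1/2 * real 3 * pi) * x ^ 3 \<ge> - 1 * x ^ 3"
    using assms by (intro mult_right_mono) auto
  ultimately show ?thesis
    by (simp add: sin_coeff_def lessThan_nat_numeral fact_numeral)
qed

lemma cos_square_ge: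
  fixes u :: real
  assumes "u\<^sup>2 \<le> 2"
  shows "(1 - u\<^sup>2 / 2)\<^sup>2 \<le> (cos u)\<^sup>2"
  using cos_ge_taylor2[of u] assms by (intro power_mono) auto

lemma sin_square_ge:
  fixes s :: real
  assumes "0 \<le> s" "s\<^sup>2 \<le> 6"
  shows "s\<^sup>2 * (1 - s\<^sup>2 / 3) \<le> (sin s)\<^sup>2"
proof -
  have "s - s ^ 3 / 6 = s * (1 - s\<^sup>2 / 6)"
    by (simp add: power2_eq_square power3_eq_cube algebra_simps)
  moreover have "0 \<le> s * (1 - s\<^sup>2 / 6)"
    using assms by simp
  ultimately have "(s * (1 - s\<^sup>2 / 6))\<^sup>2 \<le> (sin s)\<^sup>2"
    using sin_ge_taylor3[OF \<open>0 \<le> s\<close>] by (intro power_mono) auto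
  moreover have "(s * (1 - s\<^sup>2 / 6))\<^sup>2 = s\<^sup>2 * (1 - s\<^sup>2 / 3) + s\<^sup>2 * (s\<^sup>2 / 6)\<^sup>2"
    by (simp add: power2_eq_square algebra_simps)
  moreover have "0 \<le> s\<^sup>2 * (s\<^sup>2 / 6)\<^sup>2"
    by simp
  ultimately show ?thesis
    by linarith
qed

lemma pi_squared_bounds: "49/5 \<le> pi\<^sup>2" "pi\<^sup>2 \<le> 10"
proof -
  have "(314/100) ^ 2 \<le> pi\<^sup>2" "pi\<^sup>2 \<le> (316/100) ^ 2"
    using pi_approx by (intro power_mono; simp)+
  moreover have "49/5 \<le> (314/100::real) ^ 2" "(316/100::real) ^ 2 \<le> 10"
    by (simp_all add: power2_eq_square)
  ultimately show "49/5 \<le> pi\<^sup>2" "pi\<^sup>2 \<le> 10"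
    by linarith+
qed

lemma cos_half_pi_eq_sin: "cos (pi * x / 2) = sin (pi * (1 - x) / 2)"
proof -
  have "pi * (1 - x) / 2 = pi / 2 - pi * x / 2"
    by (simp add: field_simps)
  then show ?thesis
    by (simp only:) (simp add: sin_diff)
qed

lemma cos_half_pi_le_one_minus_square_near_zero:
  fixes x :: real
  assumes "\<bar>x\<bar> \<le> 3/5"
  shows "cos (pi * x / 2) \<le> 1 - x\<^sup>2"
proof -
  define u where "u = pi * x / 2"
  have u2: "u\<^sup>2 = pi\<^sup>2 * x\<^sup>2 / 4"
    unfolding u_def by (simp add: power_mult_distrib power_divide)
  have "\<bar>x\<bar>\<^sup>2 \<le> (3/5)\<^sup>2"
    using assms by (intro power_mono) auto
  then have x2: "x\<^sup>2 \<le> 9/25"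
    by (simp add: power2_eq_square)
  have "49/5 * x\<^sup>2 \<le> pi\<^sup>2 * x\<^sup>2"
    using pi_squared_bounds(1) by (intro mult_right_mono) auto
  moreover have "pi\<^sup>2 * x\<^sup>2 \<le> 10 * (9/25)"
    using pi_squared_bounds(2) x2 by (intro mult_mono) auto
  ultimately have "49/40 * x\<^sup>2 \<le> u\<^sup>2 / 2" "37/40 \<le> 1 - u\<^sup>2 / 12"
    using u2 by linarith+
  then have "49/40 * x\<^sup>2 * (37/40) \<le> u\<^sup>2 / 2 * (1 - u\<^sup>2 / 12)"
    by (intro mult_mono) auto
  moreover have "1 - u\<^sup>2 / 2 + u ^ 4 / 24 = 1 - u\<^sup>2 / 2 * (1 - u\<^sup>2 / 12)"
    by (simp add: power2_eq_square power4_eq_xxxx field_simps)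
  moreover have "0 \<le> x\<^sup>2"
    by simp
  ultimately have "cos u \<le> 1 - x\<^sup>2"
    using cos_le_taylor4[of u] by linarith
  then show ?thesis
    by (simp add: u_def)
qed

lemma cos_half_pi_le_one_minus_square_near_one:
  fixes x :: real
  assumes "3/5 \<le> x" "x \<le> 1"
  shows "cos (pi * x / 2) \<le> 1 - x\<^sup>2"
proof -
  define t where "t = 1 - x"
  have t: "0 \<le> t" "t \<le> 2/5"
    using assms unfolding t_def by auto
  have "cos (pi * x / 2) = sin (pi * t / 2)"
    unfolding t_def by (rule cos_half_pi_eq_sin)
  also have "\<dots> \<le> t * (pi / 2)"
    using sin_x_le_x[of "pi * t / 2"] t by (simp add: mult.commute)
  also have "\<dots> \<le> t * (2 - t)"
    using t pi_approx by (intro mult_left_mono) auto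
  also have "\<dots> = 1 - x\<^sup>2"
    unfolding t_def by (simp add: power2_eq_square algebra_simps)
  finally show ?thesis .
qed

lemma square_one_minus_square_le_near_zero:
  fixes x :: real
  assumes "\<bar>x\<bar> \<le> 3/5"
  shows "(1 - x\<^sup>2)\<^sup>2 \<le> (x\<^sup>2 + 1) * (cos (pi * x / 2))\<^sup>2"
proof -
  define u where "u = pi * x / 2"
  define y where "y = x\<^sup>2"
  have u2: "u\<^sup>2 = pi\<^sup>2 * y / 4"
    unfolding u_def y_def by (simp add: power_mult_distrib power_divide)
  have "\<bar>x\<bar>\<^sup>2 \<le> (3/5)\<^sup>2"
    using assms by (intro power_mono) auto
  then have y: "0 \<le> y" "y \<le> 9/25"
    unfolding y_def by (simp_all add: power2_eq_square)
  have "pi\<^sup>2 * y \<le> 10 * y"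
    using pi_squared_bounds y by (intro mult_right_mono) auto
  then have "0 \<le> 1 - 5/4 * y" "1 - 5/4 * y \<le> 1 - u\<^sup>2 / 2" "u\<^sup>2 \<le> 2"
    using u2 y by linarith+
  then have "(1 - 5/4 * y)\<^sup>2 \<le> (cos u)\<^sup>2"
    using cos_square_ge[of u] power_mono[of "1 - 5/4 * y" "1 - u\<^sup>2 / 2" 2] by linarith
  then have "(1 + y) * (1 - 5/4 * y)\<^sup>2 \<le> (1 + y) * (cos u)\<^sup>2"
    using y by (intro mult_left_mono) auto
  moreover have "(1 + y) * (1 - 5/4 * y)\<^sup>2 - (1 - y)\<^sup>2
      = y / 16 * (25 * (y - 9/25)\<^sup>2 + 13 * (9/25 - y) + 2/25)"
    by algebra
  moreover have "0 \<le> y / 16 * (25 * (y - 9/25)\<^sup>2 + 13 * (9/25 - y) + 2/25)"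
    using y by (intro mult_nonneg_nonneg add_nonneg_nonneg) auto
  ultimately show ?thesis
    unfolding u_def y_def by (simp add: add.commute)
qed

lemma square_two_minus_le_quartic:
  fixes t :: real
  assumes "0 \<le> t" "t \<le> 2/5"
  shows "(2 - t)\<^sup>2 \<le> (2 - 2 * t + t\<^sup>2) * (49/20 * (1 - 5/6 * t\<^sup>2))"
proof -
  have "t\<^sup>2 \<le> 2/5 * t" "t ^ 4 \<le> t ^ 3" "0 \<le> t ^ 3"
    using assms mult_right_mono[of t "2/5" t] mult_left_mono[of t 1 "t ^ 3"]
    by (simp_all add: power2_eq_square power_eq_if)
  moreover have "(2 - 2 * t + t\<^sup>2) * (49/20 * (1 - 5/6 * t\<^sup>2)) - (2 - t)\<^sup>2
      = 9/10 - 9/10 * t - 79/30 * t\<^sup>2 + 49/12 * t ^ 3 - 49/24 * t ^ 4"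
    by algebra
  ultimately show ?thesis
    using assms by linarith
qed

lemma square_one_minus_square_le_near_one:
  fixes x :: real
  assumes "3/5 \<le> x" "x \<le> 1"
  shows "(1 - x\<^sup>2)\<^sup>2 \<le> (x\<^sup>2 + 1) * (cos (pi * x / 2))\<^sup>2"
proof -
  define t where "t = 1 - x"
  define s where "s = pi * t / 2"
  have t: "0 \<le> t" "t \<le> 2/5"
    using assms unfolding t_def by auto
  have s2: "s\<^sup>2 = pi\<^sup>2 * t\<^sup>2 / 4"
    unfolding s_def by (simp add: power_mult_distrib power_divide)
  have "t\<^sup>2 \<le> (2/5)\<^sup>2"
    using t by (intro power_mono) auto
  then have t2: "t\<^sup>2 \<le> 4/25"
    by (simp add: power2_eq_square)
  have "49/5 * t\<^sup>2 \<le> pi\<^sup>2 * t\<^sup>2" "pi\<^sup>2 * t\<^sup>2 \<le> 10 * t\<^sup>2"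
    using pi_squared_bounds by (intro mult_right_mono; simp)+
  then have "49/20 * t\<^sup>2 \<le> s\<^sup>2" "0 \<le> 1 - 5/6 * t\<^sup>2" "1 - 5/6 * t\<^sup>2 \<le> 1 - s\<^sup>2 / 3"
    and s2_le: "s\<^sup>2 \<le> 6"
    using s2 t2 by linarith+
  then have "49/20 * t\<^sup>2 * (1 - 5/6 * t\<^sup>2) \<le> s\<^sup>2 * (1 - s\<^sup>2 / 3)"
    by (intro mult_mono) auto
  also have "\<dots> \<le> (cos (pi * x / 2))\<^sup>2"
    using sin_square_ge[OF _ s2_le] t unfolding s_def t_def cos_half_pi_eq_sin[of x] by simp
  finally have cos2: "49/20 * t\<^sup>2 * (1 - 5/6 * t\<^sup>2) \<le> (cos (pi * x / 2))\<^sup>2" .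
  have "(2 - t)\<^sup>2 \<le> (2 - 2 * t + t\<^sup>2) * (49/20 * (1 - 5/6 * t\<^sup>2))"
    using t by (rule square_two_minus_le_quartic)
  then have "t\<^sup>2 * (2 - t)\<^sup>2 \<le> t\<^sup>2 * ((2 - 2 * t + t\<^sup>2) * (49/20 * (1 - 5/6 * t\<^sup>2)))"
    by (intro mult_left_mono) auto
  also have "\<dots> = (2 - 2 * t + t\<^sup>2) * (49/20 * t\<^sup>2 * (1 - 5/6 * t\<^sup>2))"
    by (simp only: ac_simps)
  also have "\<dots> \<le> (2 - 2 * t + t\<^sup>2) * (cos (pi * x / 2))\<^sup>2"
    by (rule mult_left_mono[OF cos2]) (use t zero_le_power2[of t] in linarith)
  finally show ?thesis
    unfolding t_def by (simp add: power2_eq_square algebra_simps)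
qed

lemma cos_half_pi_le_one_minus_square:
  fixes x :: real
  assumes "\<bar>x\<bar> \<le> 1"
  shows "cos (pi * x / 2) \<le> 1 - x\<^sup>2"
proof -
  have "cos (pi * \<bar>x\<bar> / 2) \<le> 1 - \<bar>x\<bar>\<^sup>2"
    using cos_half_pi_le_one_minus_square_near_zero[of "\<bar>x\<bar>"]
      cos_half_pi_le_one_minus_square_near_one[of "\<bar>x\<bar>"] assms
    by (cases "\<bar>x\<bar> \<le> 3/5") auto
  moreover have "cos (pi * \<bar>x\<bar> / 2) = cos (pi * x / 2)"
    by (cases "x < 0") (simp_all add: minus_divide_left[symmetric])
  ultimately show ?thesis
    by simp
qed

lemma square_one_minus_square_le:
  fixes x :: real
  assumes "\<bar>x\<bar> \<le> 1"
  shows "(1 - x\<^sup>2)\<^sup>2 \<le> (x\<^sup>2 + 1) * (cos (pi * x / 2))\<^sup>2"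
proof -
  have "(1 - \<bar>x\<bar>\<^sup>2)\<^sup>2 \<le> (\<bar>x\<bar>\<^sup>2 + 1) * (cos (pi * \<bar>x\<bar> / 2))\<^sup>2"
    using square_one_minus_square_le_near_zero[of "\<bar>x\<bar>"]
      square_one_minus_square_le_near_one[of "\<bar>x\<bar>"] assms
    by (cases "\<bar>x\<bar> \<le> 3/5") auto
  moreover have "cos (pi * \<bar>x\<bar> / 2) = cos (pi * x / 2)"
    by (cases "x < 0") (simp_all add: minus_divide_left[symmetric])
  ultimately show ?thesis
    by simp
qed

lemma f1_le_one:
  assumes "0 \<le> x" "x \<le> 1"
  shows "f1 x \<le> 1"
proof (cases "x = 1")
  case True
  then show ?thesis
    using pi_less_4 by (simp add: f1_def)
next
  case False
  then have "x\<^sup>2 < 1"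
    using assms by (simp add: abs_square_less_1)
  then show ?thesis
    using cos_half_pi_le_one_minus_square[of x] assms False by (simp add: f1_def)
qed

lemma one_le_f2:
  assumes "0 \<le> x" "x \<le> 1"
  shows "1 \<le> f2 x"
proof (cases "x = 1")
  case True
  then show ?thesis
    using pi_squared_bounds by (simp add: f2_def)
next
  case False
  then have "x\<^sup>2 < 1"
    using assms by (simp add: abs_square_less_1)
  then show ?thesis
    using square_one_minus_square_le[of x] assms False by (simp add: f2_def le_divide_eq)
qed

theorem lemma6:
  shows "(\<forall>x\<in>{0..1::real}. f1 x \<le> f1 0) \<and> (\<forall>x\<in>{0..1::real}. f2 0 \<le> f2 x)"
proof -
  have "f1 0 = 1" "f2 0 = 1"
    by (simp_all add: f1_def f2_def)
  then show ?thesis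
    using f1_le_one one_le_f2 by auto
qed

end
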